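(* Let $X$ be an irreducible holomorphic symplectic manifold of $\mathrm{OG6}$ type with a marking $\eta\colon H^2(X,\mathbb{Z})\to\mathbf{L}$, where $\mathbf{L}=U^{\oplus3}\oplus[-2]^{\oplus2}$. If $G\subset\mathrm{O}(\mathbf{L})$ is a nonsymplectic group of prime order $p$, then $p\in\{2,3,5,7\}$.
   Context: An irreducible holomorphic symplectic manifold is a simply connected compact Kähler manifold $X$ with $H^0(X,\Omega^2_X)$ spanned by a nowhere degenerate holomorphic 2-form $\sigma_X$; $\mathrm{OG6}$ type means deformation equivalent to O'Grady's six-dimensional example, and then $H^2(X,\mathbb{Z})$ with the Beauville–Bogomolov–Fujiki form is isometric to $\mathbf{L}$. A marking is an isometry $\eta\colon H^2(X,\mathbb{Z})\to\mathbf{L}$. An isometry $\varphi\in\mathrm{O}(\mathbf{L})$ is nonsymplectic if $\varphi\otimes\mathbb{C}$ acts nontrivially on the line $\mathbb{C}\,\eta(\sigma_X)$; a cyclic group is nonsymplectic if generated by a nonsymplectic isometry. $U$ is the hyperbolic plane, $[n]$ the rank one lattice with generator of square $n$. *)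

theory Defs
  imports "Jordan_Normal_Form.Matrix" "HOL-Computational_Algebra.Primes"
begin

text \<open>The lattice L = U^3 + [-2]^2, as Z^8 with Gram matrix L_gram
  (coordinates 0..5 carry three hyperbolic planes, 6 and 7 the two [-2] summands).\<close>
definition L_gram :: "int mat" where
  "L_gram = mat 8 8 (\<lambda>(i,j).
     if i < 6 \<and> j < 6 \<and> i div 2 = j div 2 \<and> i \<noteq> j then 1
     else if 6 \<le> i \<and> i = j then -2 else 0)"

definition isometry_L :: "int mat \<Rightarrow> bool" where
  "isometry_L \<phi> \<longleftrightarrow> \<phi> \<in> carrier_mat 8 8 \<and>
     transpose_mat \<phi> * L_gram * \<phi> = L_gram \<and>
     (\<exists>\<psi> \<in> carrier_mat 8 8. \<phi> * \<psi> = 1\<^sub>m 8 \<and> \<psi> * \<phi> = 1\<^sub>m 8)"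

definition L_form_C :: "complex vec \<Rightarrow> complex vec \<Rightarrow> complex" where
  "L_form_C x y = x \<bullet> (map_mat of_int L_gram *\<^sub>v y)"

text \<open>Period conditions satisfied by eta(sigma_X) (Beauville-Bogomolov / Hodge-Riemann):
  q(w) = 0 and q(w, conj w) > 0.\<close>
definition period_vec :: "complex vec \<Rightarrow> bool" where
  "period_vec \<omega> \<longleftrightarrow> \<omega> \<in> carrier_vec 8 \<and> L_form_C \<omega> \<omega> = 0 \<and>
     Im (L_form_C (map_vec cnj \<omega>) \<omega>) = 0 \<and> Re (L_form_C (map_vec cnj \<omega>) \<omega>) > 0"

definition nonsymplectic :: "complex vec \<Rightarrow> int mat \<Rightarrow> bool" where
  "nonsymplectic \<omega> \<phi> \<longleftrightarrow>
     (\<exists>c. c \<noteq> 1 \<and> map_mat of_int \<phi> *\<^sub>v \<omega> = c \<cdot>\<^sub>v \<omega>)"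

end

(* A nonsymplectic isometry \<phi> of prime order p multiplies the period \<omega> by a scalar
   c \<noteq> 1 with c^p = 1.  Thus c is a root of the characteristic polynomial of \<phi>, an
   integer polynomial of degree rank L = 8.  The integer polynomial of least degree vanishing
   at c divides 1 + X + ... + X^(p-1), which is irreducible by Eisenstein's criterion applied
   to its translate by X + 1; hence p - 1 \<le> 8, and the primes up to 9 are 2, 3, 5, 7. *)

theory Submission
  imports Defs "Jordan_Normal_Form.Char_Poly" "HOL-Combinatorics.Orbits"
begin

lemma eisenstein_factor_degree_eq_0:
  fixes p :: "'a :: idom"
  assumes p: "prime_elem p" and F: "F = g * h"
    and lead: "\<not> p dvd lead_coeff F" and low: "\<And>i. i < degree F \<Longrightarrow> p dvd coeff F i"
    and h0: "\<not> p dvd coeff h 0"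
  shows "degree h = 0"
proof -
  have "\<not> p dvd lead_coeff g"
    using lead by (metis F lead_coeff_mult dvd_mult2)
  then have ex: "\<exists>i. \<not> p dvd coeff g i" by blast
  define i where "i = (LEAST i. \<not> p dvd coeff g i)"
  have gi: "\<not> p dvd coeff g i" and below: "\<And>j. j < i \<Longrightarrow> p dvd coeff g j"
    unfolding i_def using LeastI_ex[OF ex] not_less_Least by blast+
  have "i \<le> degree g"
    using gi by (metis dvd_0_right le_degree)
  have "{..i} = insert i {..<i}"
    by auto
  then have "coeff F i = (\<Sum>j<i. coeff g j * coeff h (i - j)) + coeff g i * coeff h 0"
    by (simp add: F coeff_mult)
  moreover have "p dvd (\<Sum>j<i. coeff g j * coeff h (i - j))"
    by (intro dvd_sum) (simp add: below)
  moreover have "\<not> p dvd coeff g i * coeff h 0"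
    using gi h0 p by (simp add: prime_elem_dvd_mult_iff)
  ultimately have "\<not> p dvd coeff F i"
    by (simp add: dvd_add_right_iff)
  then have "degree F \<le> i"
    using low not_le by blast
  moreover have "g \<noteq> 0" "h \<noteq> 0"
    using h0 gi by auto
  ultimately show ?thesis
    using \<open>i \<le> degree g\<close> by (simp add: F degree_mult_eq)
qed

lemma eisenstein_criterion:
  fixes p :: "'a :: idom"
  assumes p: "prime_elem p" and F: "F = g * h"
    and lead: "\<not> p dvd lead_coeff F" and low: "\<And>i. i < degree F \<Longrightarrow> p dvd coeff F i"
    and const: "\<not> p\<^sup>2 dvd coeff F 0"
  shows "degree g = 0 \<or> degree h = 0"
proof -
  have "coeff F 0 = coeff g 0 * coeff h 0"
    by (simp add: F coeff_mult)
  then consider "\<not> p dvd coeff h 0" | "\<not> p dvd coeff g 0"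
    using const by (metis mult_dvd_mono power2_eq_square)
  then show ?thesis
  proof cases
    case 1
    with p F lead low have "degree h = 0"
      by (rule eisenstein_factor_degree_eq_0)
    then show ?thesis ..
  next
    case 2
    with p F[unfolded mult.commute[of g]] lead low have "degree g = 0"
      by (rule eisenstein_factor_degree_eq_0)
    then show ?thesis ..
  qed
qed

(* For prime p this is the p-th cyclotomic polynomial. *)
definition geom_poly :: "nat \<Rightarrow> 'a :: comm_ring_1 poly" where
  "geom_poly n = (\<Sum>i<n. monom 1 i)"

lemma coeff_geom_poly: "coeff (geom_poly n) i = (if i < n then 1 else 0)"
  by (simp add: geom_poly_def coeff_sum)

lemma degree_geom_poly: "0 < n \<Longrightarrow> degree (geom_poly n) = n - 1"
  by (intro antisym degree_le le_degree) (auto simp: coeff_geom_poly)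

lemma map_poly_geom_poly: "map_poly of_int (geom_poly n) = geom_poly n"
  by (intro poly_eqI) (simp add: coeff_map_poly coeff_geom_poly)

lemma poly_geom_poly: "(x - 1) * poly (geom_poly n) x = x ^ n - 1"
  by (simp add: geom_poly_def poly_sum poly_monom power_diff_1_eq)

lemma content_geom_poly: "0 < n \<Longrightarrow> content (geom_poly n :: int poly) = 1"
  using content_dvd_coeff[of "geom_poly n" 0] by (simp add: coeff_geom_poly)

lemma coeff_geom_poly_shift:
  "coeff (pcompose (geom_poly n) [:1, 1:]) i = (of_nat (n choose Suc i) :: 'a :: {idom, ring_char_0})"
proof -
  have "poly ([:0, 1:] * pcompose (geom_poly n) [:1, 1:]) x = poly ([:1, 1:] ^ n - 1) x" for x :: 'a
    using poly_geom_poly[of "x + 1" n] by (simp add: poly_pcompose algebra_simps)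
  then have "[:0, 1:] * pcompose (geom_poly n) [:1, 1:] = [:1, 1:] ^ n - (1 :: 'a poly)"
    by (rule poly_ext)
  then have "coeff (pcompose (geom_poly n) [:1, 1:]) i = coeff ([:1, 1 :: 'a:] ^ n - 1) (Suc i)"
    by (metis coeff_pCons_Suc pCons_0_as_mult)
  also have "\<dots> = of_nat (n choose Suc i)"
  proof (cases "Suc i \<le> n")
    case False
    then have "coeff ([:1, 1 :: 'a:] ^ n) (Suc i) = 0"
      using degree_power_le[of "[:1, 1 :: 'a:]" n] by (simp add: coeff_eq_0)
    with False show ?thesis
      by simp
  qed (simp add: coeff_linear_poly_power)
  finally show ?thesis .
qed

lemma irreducible_geom_poly:
  assumes p: "prime p"
  shows "irreducible (geom_poly p :: int poly)"
proof (rule irreducibleI)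
  have p0: "0 < p" and p1: "1 < p"
    using prime_gt_1_nat[OF p] by auto
  show "geom_poly p \<noteq> (0 :: int poly)"
    using coeff_geom_poly[of p 0] p0 by (metis coeff_0 one_neq_zero)
  show "\<not> geom_poly p dvd (1 :: int poly)"
  proof
    assume "geom_poly p dvd (1 :: int poly)"
    then have "degree (geom_poly p :: int poly) = 0"
      by (auto simp: is_unit_poly_iff)
    then show False
      using degree_geom_poly[OF p0, where 'a = int] p1 by simp
  qed
  fix g h :: "int poly"
  assume gh: "geom_poly p = g * h"
  define F where "F = pcompose (geom_poly p) [:1, 1 :: int:]"
  have degF: "degree F = p - 1"
    by (simp add: F_def degree_geom_poly[OF p0])
  have coeffF: "coeff F i = int (p choose Suc i)" for i
    unfolding F_def by (rule coeff_geom_poly_shift)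
  have "degree (pcompose g [:1, 1:]) = 0 \<or> degree (pcompose h [:1, 1:]) = 0"
  proof (rule eisenstein_criterion[where p = "int p"])
    show "prime_elem (int p)"
      using p by simp
    show "F = pcompose g [:1, 1:] * pcompose h [:1, 1:]"
      by (simp add: F_def gh pcompose_mult)
    show "\<not> int p dvd lead_coeff F"
      using p1 by (simp add: degF coeffF)
    show "int p dvd coeff F i" if "i < degree F" for i
      using that p by (simp add: degF coeffF dvd_choose_prime)
    show "\<not> (int p)\<^sup>2 dvd coeff F 0"
      using p1 by (simp add: coeffF power2_eq_square)
  qed
  then have "degree g = 0 \<or> degree h = 0"
    by simp
  moreover have "content g * content h = 1"
    using content_geom_poly[OF p0] by (simp add: gh content_mult)
  then have "content g dvd 1" "content h dvd 1"
    by (metis dvdI, metis dvdI mult.commute)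
  moreover have "q dvd 1" if "degree q = 0" "content q dvd 1" for q :: "int poly"
    using that by (auto simp: is_unit_poly_iff elim!: degree_eq_zeroE)
  ultimately show "g dvd 1 \<or> h dvd 1"
    by blast
qed

lemma min_degree_root_poly_dvd:
  fixes m g :: "int poly" and c :: complex
  assumes m: "content m = 1" "poly (map_poly of_int m) c = 0"
    and min: "\<And>f. f \<noteq> 0 \<Longrightarrow> poly (map_poly of_int f) c = 0 \<Longrightarrow> degree m \<le> degree f"
    and g: "content g = 1" "poly (map_poly of_int g) c = 0"
  shows "m dvd g"
proof -
  have "m \<noteq> 0"
    using m by auto
  define r where "r = pseudo_mod g m"
  obtain a :: int and q where "a \<noteq> 0" and div: "smult a g = m * q + r"
    using pseudo_mod(1)[OF \<open>m \<noteq> 0\<close>, of g] unfolding r_def by blast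
  have "r = 0 \<or> degree r < degree m"
    using pseudo_mod(2)[OF \<open>m \<noteq> 0\<close>, of g] unfolding r_def by blast
  moreover have "poly (map_poly of_int r) c = 0"
  proof -
    have "poly (map_poly of_int (smult a g)) c = poly (map_poly of_int (m * q + r)) c"
      by (simp only: div)
    then show ?thesis
      using m g by (simp add: hom_distribs)
  qed
  ultimately have "r = 0"
    using min not_le by blast
  then have "primitive_part m dvd primitive_part (smult a g)"
    using div by auto
  then have "m dvd smult (sgn a) g"
    using m g by (simp add: primitive_part_smult primitive_part_prim)
  then have "m dvd smult (sgn a) (smult (sgn a) g)"
    by (rule dvd_smult)
  then show ?thesis
    using \<open>a \<noteq> 0\<close> by (simp add: sgn_mult[symmetric])
qed

lemma degree_ge_of_root_of_unity:
  fixes f :: "int poly" and c :: complex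
  assumes p: "prime p" and c: "c ^ p = 1" "c \<noteq> 1"
    and f: "f \<noteq> 0" "poly (map_poly of_int f) c = 0"
  shows "p - 1 \<le> degree f"
proof -
  let ?root = "\<lambda>g :: int poly. g \<noteq> 0 \<and> poly (map_poly of_int g) c = 0"
  obtain m0 where m0: "?root m0" and min0: "\<And>g. ?root g \<Longrightarrow> degree m0 \<le> degree g"
    using ex_has_least_nat[of ?root f degree] f by blast
  define m where "m = primitive_part m0"
  have "poly (map_poly of_int m0) c = of_int (content m0) * poly (map_poly of_int m) c"
    by (metis content_times_primitive_part m_def of_int_hom.map_poly_hom_smult poly_smult)
  then have m: "content m = 1" "poly (map_poly of_int m) c = 0" "degree m = degree m0"
    using m0 by (simp_all add: m_def)
  have p0: "0 < p"
    using prime_gt_0_nat[OF p] .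
  have "poly (map_poly of_int (geom_poly p)) c = 0"
    using poly_geom_poly[of c p] c by (simp add: map_poly_geom_poly)
  then have "m dvd geom_poly p"
    using m min0 content_geom_poly[OF p0] by (intro min_degree_root_poly_dvd) auto
  then obtain q where q: "geom_poly p = m * q" ..
  with irreducible_geom_poly[OF p] have "m dvd 1 \<or> q dvd 1"
    by (rule irreducibleD)
  moreover have "\<not> m dvd 1"
    using m by (auto simp: is_unit_poly_iff)
  ultimately have "degree q = 0"
    by (auto simp: is_unit_poly_iff)
  moreover have "degree (m * q) = p - 1"
    using degree_geom_poly[OF p0, where 'a = int] by (simp add: q[symmetric])
  moreover have "m \<noteq> 0" "q \<noteq> 0"
    using \<open>degree (m * q) = p - 1\<close> prime_gt_1_nat[OF p] m(1) by auto
  ultimately have "degree m = p - 1"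
    by (simp add: degree_mult_eq)
  then show ?thesis
    using m min0 f by auto
qed

lemma (in group) pow_card_nat_powers_eq_one:
  assumes a: "a \<in> carrier G" and fin: "finite {a [^] (k :: nat) | k. True}"
  shows "a [^] card {a [^] (k :: nat) | k. True} = \<one>"
proof -
  define f where "f x = a \<otimes> x" for x
  have f_pow: "(f ^^ n) \<one> = a [^] n" for n
    by (induction n) (simp_all add: f_def a flip: nat_pow_Suc2)
  have "\<not> inj (\<lambda>k :: nat. a [^] k)"
    using fin finite_imageD[of "\<lambda>k :: nat. a [^] k" UNIV] by (auto simp: full_SetCompr_eq)
  then obtain i j :: nat where "i < j" "a [^] j = a [^] i"
    unfolding inj_def by (metis linorder_neqE_nat)
  then have "(f ^^ (j - i)) \<one> = \<one>" "0 < j - i"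
    using pow_eq_div2[OF a] by (simp_all add: f_pow)
  then have one_orbit: "\<one> \<in> orbit f \<one>"
    unfolding orbit_altdef by (metis (mono_tags, lifting) mem_Collect_eq)
  have "{a [^] (k :: nat) | k. True} = orbit f \<one>"
    by (simp add: orbit_altdef_self_in[OF one_orbit] f_pow)
  also have "\<dots> = (\<lambda>n. (f ^^ n) \<one>) ` {0..<funpow_dist1 f \<one> \<one>}"
    by (rule orbit_conv_funpow_dist1[OF one_orbit])
  finally have "card {a [^] (k :: nat) | k. True} = funpow_dist1 f \<one> \<one>"
    using inj_on_funpow_dist1[OF one_orbit] by (simp add: card_image)
  then show ?thesis
    using funpow_dist1_prop[OF one_orbit] by (simp only: f_pow)
qed

lemma pow_mat_card_powers_eq_one:
  fixes A :: "'a :: semiring_1 mat"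
  assumes A: "A \<in> carrier_mat n n" and B: "B \<in> carrier_mat n n"
    and inv: "A * B = 1\<^sub>m n" "B * A = 1\<^sub>m n" and fin: "finite {A ^\<^sub>m k | k. True}"
  shows "A ^\<^sub>m card {A ^\<^sub>m k | k. True} = 1\<^sub>m n"
proof -
  let ?R = "ring_mat TYPE('a) n ()"
  interpret monoid ?R
    using semiring_mat by (rule semiring.axioms)
  have unit: "A \<in> Units ?R"
    using A B inv by (auto simp: Units_def ring_mat_simps)
  interpret U: group "units_of ?R"
    by (rule units_group)
  have pow: "A ^\<^sub>m k = A [^]\<^bsub>units_of ?R\<^esub> k" for k
    using pow_mat_ring_pow[OF A] units_of_pow[OF unit] by simp
  show ?thesis
    using U.pow_card_nat_powers_eq_one[of A] unit fin
    by (simp add: pow units_of_carrier units_of_one ring_mat_simps)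
qed

lemma period_vec_nonzero: "period_vec \<omega> \<Longrightarrow> \<omega> \<noteq> 0\<^sub>v 8"
  by (auto simp: period_vec_def L_form_C_def scalar_prod_def L_gram_def)

lemma nonsymplectic_eigenvector:
  assumes "period_vec \<omega>" and "\<phi> \<in> carrier_mat 8 8" and "nonsymplectic \<omega> \<phi>"
  obtains c where "c \<noteq> 1" and "eigenvector (map_mat of_int \<phi>) \<omega> c"
  using assms period_vec_nonzero[OF assms(1)]
  by (auto simp: nonsymplectic_def eigenvector_def period_vec_def)

lemma of_int_eigenvalue_root_char_poly:
  fixes c :: "'a :: {field, ring_char_0}"
  assumes A: "A \<in> carrier_mat n n" and ev: "eigenvector (map_mat of_int A) v c"
  shows "poly (map_poly of_int (char_poly A)) c = 0"
proof -
  have "eigenvalue (map_mat of_int A) c"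
    using ev by (auto simp: eigenvalue_def)
  then have "poly (char_poly (map_mat of_int A)) c = 0"
    using eigenvalue_root_char_poly[of "map_mat of_int A" n c] A by simp
  then show ?thesis
    by (simp only: of_int_hom.char_poly_hom[OF A])
qed

lemma eigenvalue_pow_eq_one:
  fixes c :: "'a :: idom"
  assumes A: "A \<in> carrier_mat n n" and ev: "eigenvector A v c" and pow: "A ^\<^sub>m k = 1\<^sub>m n"
  shows "c ^ k = 1"
proof -
  have v: "v \<in> carrier_vec n" "v \<noteq> 0\<^sub>v n"
    using ev A by (auto simp: eigenvector_def)
  then obtain i where i: "i < n" "v $ i \<noteq> 0"
    by (metis carrier_vecD eq_vecI index_zero_vec)
  have "v = c ^ k \<cdot>\<^sub>v v"
    using eigenvector_pow[OF A ev, of k] pow v by simp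
  then have "v $ i = c ^ k * v $ i"
    using i v by (metis carrier_vecD index_smult_vec(1))
  then show ?thesis
    using i by simp
qed

lemma prime_le_9_cases:
  assumes p: "prime (p :: nat)" and "p \<le> 9"
  shows "p \<in> {2, 3, 5, 7}"
proof -
  have "2 \<le> p" "\<not> 2 dvd p \<or> p = 2" "\<not> 3 dvd p \<or> p = 3"
    using p prime_ge_2_nat by (auto simp: prime_nat_iff)
  then show ?thesis
    using \<open>p \<le> 9\<close> by simp presburger
qed

theorem proposition3p3:
  fixes \<omega> :: "complex vec" and G :: "int mat set" and \<phi> :: "int mat" and p :: nat
  assumes "period_vec \<omega>"
    and "isometry_L \<phi>"
    and "G = {\<phi> ^\<^sub>m k | k. True}"
    and "nonsymplectic \<omega> \<phi>"
    and "prime p"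
    and "card G = p"
  shows "p \<in> {2, 3, 5, 7}"
proof -
  obtain \<psi> where \<phi>: "\<phi> \<in> carrier_mat 8 8"
    and \<psi>: "\<psi> \<in> carrier_mat 8 8" "\<phi> * \<psi> = 1\<^sub>m 8" "\<psi> * \<phi> = 1\<^sub>m 8"
    using assms(2) by (auto simp: isometry_L_def)
  have "finite G"
    using assms(5,6) card_ge_0_finite prime_gt_0_nat by metis
  then have "\<phi> ^\<^sub>m p = 1\<^sub>m 8"
    using pow_mat_card_powers_eq_one[OF \<phi> \<psi>] assms(3,6) by simp
  then have order: "map_mat (of_int :: int \<Rightarrow> complex) \<phi> ^\<^sub>m p = 1\<^sub>m 8"
    by (simp flip: of_int_hom.mat_hom_pow[OF \<phi>] add: of_int_hom.mat_hom_one)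
  obtain c where "c \<noteq> 1" and ev: "eigenvector (map_mat of_int \<phi>) \<omega> c"
    using nonsymplectic_eigenvector[OF assms(1) \<phi> assms(4)] .
  have "c ^ p = 1"
    using eigenvalue_pow_eq_one[OF _ ev order] \<phi> by simp
  moreover have "poly (map_poly of_int (char_poly \<phi>)) c = 0"
    by (rule of_int_eigenvalue_root_char_poly[OF \<phi> ev])
  moreover have "degree (char_poly \<phi>) = 8" and "char_poly \<phi> \<noteq> 0"
    using degree_monic_char_poly[OF \<phi>] by auto
  ultimately have "p \<le> 9"
    using degree_ge_of_root_of_unity[OF assms(5) _ \<open>c \<noteq> 1\<close>, of "char_poly \<phi>"] by simp
  then show ?thesis
    by (rule prime_le_9_cases[OF assms(5)])
qed

end
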